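(* Let $\rho$ be a separable two-qubit state with Bloch representation $\rho=\frac14\big[I\otimes I+\sum_i x_i\sigma_i\otimes I+\sum_j y_j I\otimes\sigma_j+\sum_{i,j}T_{ij}\sigma_i\otimes\sigma_j\big]$. If $\mathbf{x}=\mathbf{0}$, or if $TT^t=\lambda^2 I$ for some real $\lambda$, then $\rho$ is not maximally discordant among separable states, i.e. $\mathcal{D}(\rho)<\sup\{\mathcal{D}(\tau):\tau \text{ a separable two-qubit state}\}$.
   Context: A two-qubit state is a density matrix on $\mathbb{C}^2\otimes\mathbb{C}^2$; it is separable if it is a convex combination of product states. Every two-qubit state can be written uniquely as $\rho=\frac14\big[I\otimes I+\sum_i x_i\sigma_i\otimes I+\sum_j y_j I\otimes\sigma_j+\sum_{i,j}T_{ij}\sigma_i\otimes\sigma_j\big]$ with $\mathbf{x},\mathbf{y}\in\mathbb{R}^3$, $T\in\mathbb{R}^{3\times3}$, where $\sigma_1,\sigma_2,\sigma_3$ are the Pauli matrices. The set $\Omega_0$ of classical-quantum states consists of states $\sum_k p_k|\psi_k\rangle\langle\psi_k|\otimes\rho_k^B$ with $\{|\psi_k\rangle\}$ an orthonormal basis of the first qubit, $p_k\ge0$ summing to one, and $\rho_k^B$ states of the second qubit. The normalized geometric discord is $\mathcal{D}(\rho)=2\min_{\chi\in\Omega_0}\operatorname{Tr}\big((\rho-\chi)^\dagger(\rho-\chi)\big)$, which equals $\frac12\big[\|\mathbf{x}\|^2+\|T\|^2-\lambda_{\max}(\mathbf{x}\mathbf{x}^t+TT^t)\big]$, with $\|T\|^2=\operatorname{Tr}(TT^t)$.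 *)

theory Defs
  imports "HOL-Analysis.Analysis"
begin

text \<open>Single-qubit operators: complex 2x2 matrices; two-qubit operators: complex
  matrices indexed by the product type 2 x 2 (i.e. C^2 tensor C^2).\<close>

type_synonym qop = "complex^2^2"
type_synonym qqop = "complex^(2\<times>2)^(2\<times>2)"

definition kron :: "qop \<Rightarrow> qop \<Rightarrow> qqop" where
  "kron A B = (\<chi> r c. A $ fst r $ fst c * B $ snd r $ snd c)"

definition pauli :: "3 \<Rightarrow> qop" where
  "pauli i = (if i = 1 then vector [vector [0, 1], vector [1, 0]]
              else if i = 2 then vector [vector [0, -\<i>], vector [\<i>, 0]]
              else vector [vector [1, 0], vector [0, -1]])"

definition hermitian_op :: "complex^'n^'n \<Rightarrow> bool" where
  "hermitian_op A \<longleftrightarrow> (\<forall>i j. A $ i $ j = cnj (A $ j $ i))"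

definition psd_op :: "complex^'n^'n \<Rightarrow> bool" where
  "psd_op A \<longleftrightarrow> (\<forall>v::complex^'n.
      Im (\<Sum>i\<in>UNIV. \<Sum>j\<in>UNIV. cnj (v $ i) * A $ i $ j * v $ j) = 0 \<and>
      Re (\<Sum>i\<in>UNIV. \<Sum>j\<in>UNIV. cnj (v $ i) * A $ i $ j * v $ j) \<ge> 0)"

definition tr_op :: "complex^'n^'n \<Rightarrow> complex" where
  "tr_op A = (\<Sum>i\<in>UNIV. A $ i $ i)"

definition density :: "complex^'n^'n \<Rightarrow> bool" where
  "density A \<longleftrightarrow> hermitian_op A \<and> psd_op A \<and> tr_op A = 1"

definition separable :: "qqop \<Rightarrow> bool" where
  "separable \<rho> \<longleftrightarrow> (\<exists>(n::nat) (p::nat \<Rightarrow> real) (A::nat \<Rightarrow> qop) (B::nat \<Rightarrow> qop).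
      (\<forall>k<n. p k \<ge> 0 \<and> density (A k) \<and> density (B k)) \<and> (\<Sum>k<n. p k) = 1 \<and>
      \<rho> = (\<Sum>k<n. p k *\<^sub>R kron (A k) (B k)))"

definition proj :: "complex^2 \<Rightarrow> qop" where
  "proj \<psi> = (\<chi> i j. \<psi> $ i * cnj (\<psi> $ j))"

definition cinner2 :: "complex^2 \<Rightarrow> complex^2 \<Rightarrow> complex" where
  "cinner2 u v = (\<Sum>i\<in>UNIV. cnj (u $ i) * v $ i)"

definition CQ_states :: "qqop set" where
  "CQ_states = {p0 *\<^sub>R kron (proj \<psi>0) \<rho>0 + p1 *\<^sub>R kron (proj \<psi>1) \<rho>1 |
      p0 p1 \<psi>0 \<psi>1 \<rho>0 \<rho>1.
      p0 \<ge> 0 \<and> p1 \<ge> 0 \<and> p0 + p1 = 1 \<and>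
      cinner2 \<psi>0 \<psi>0 = 1 \<and> cinner2 \<psi>1 \<psi>1 = 1 \<and> cinner2 \<psi>0 \<psi>1 = 0 \<and>
      density \<rho>0 \<and> density \<rho>1}"

text \<open>Tr((A-B)^dagger (A-B)) written out.\<close>
definition hs_dist2 :: "qqop \<Rightarrow> qqop \<Rightarrow> real" where
  "hs_dist2 A B = (\<Sum>i\<in>UNIV. \<Sum>j\<in>UNIV. (cmod (A $ i $ j - B $ i $ j))\<^sup>2)"

text \<open>Normalized geometric discord (minimum realised as infimum).\<close>
definition geom_discord :: "qqop \<Rightarrow> real" where
  "geom_discord \<rho> = 2 * Inf (hs_dist2 \<rho> ` CQ_states)"

definition bloch_state :: "real^3 \<Rightarrow> real^3 \<Rightarrow> real^3^3 \<Rightarrow> qqop" where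
  "bloch_state x y T = (1/4) *\<^sub>R (kron (mat 1) (mat 1)
      + (\<Sum>i\<in>UNIV. (x $ i) *\<^sub>R kron (pauli i) (mat 1))
      + (\<Sum>j\<in>UNIV. (y $ j) *\<^sub>R kron (mat 1) (pauli j))
      + (\<Sum>i\<in>UNIV. \<Sum>j\<in>UNIV. (T $ i $ j) *\<^sub>R kron (pauli i) (pauli j)))"

end

theory Submission
  imports Defs
begin

text \<open>
  In Bloch coordinates (x, y, T) the Hilbert-Schmidt distance is a quarter of the Euclidean
  distance of the parameters, and a classical-quantum state has x = q n and T = n w^t for a unit
  vector n; minimising over q and w gives D(rho) >= min_n (|x|^2 - (x.n)^2 + |T|^2 - |n T|^2) / 2.
  For a separable state sum_k p_k a_k (x) b_k, measuring the first qubit along any unit vector e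
  yields a classical-quantum state attaining this value at n = e.
  Moreover |T|^2 = sum_k p_k (a_k T).b_k <= max_k |a_k T|. If x = 0, choosing e along the best a_k
  gives D <= (|T|^2 - |T|^4) / 2 <= 1/8; if T T^t = l^2 I, then 3 l^2 = |T|^2 <= |l|, and choosing
  e along x gives D <= l^2 <= 1/9. The equal mixture of (3/5, 4/5, 0) (x) e_1 and
  (3/5, -4/5, 0) (x) e_2 is separable with discord at least 4/25 > 1/8.
\<close>

section \<open>Real vectors and matrices\<close>

definition outer_prod :: "real^'m \<Rightarrow> real^'n \<Rightarrow> real^'n^'m" where
  "outer_prod a b = (\<chi> i j. a $ i * b $ j)"

lemma power2_norm_vec_components: "(norm (v::'a::real_inner^'n))\<^sup>2 = (\<Sum>i\<in>UNIV. (norm (v $ i))\<^sup>2)"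
  unfolding power2_norm_eq_inner inner_vec_def ..

lemma power2_norm_vec: "(norm (v::real^'n))\<^sup>2 = (\<Sum>i\<in>UNIV. (v $ i)\<^sup>2)"
  by (simp add: power2_norm_vec_components)

lemma power2_norm_mat: "(norm (M::real^'n^'m))\<^sup>2 = (\<Sum>i\<in>UNIV. \<Sum>j\<in>UNIV. (M $ i $ j)\<^sup>2)"
  by (simp add: power2_norm_vec_components power2_norm_vec)

lemma power2_norm_vec3: "(norm (v::real^3))\<^sup>2 = (v $ 1)\<^sup>2 + (v $ 2)\<^sup>2 + (v $ 3)\<^sup>2"
  unfolding power2_norm_vec sum_3 ..

lemma norm_outer_prod: "norm (outer_prod a b) = norm a * norm b"
proof -
  have "(norm (outer_prod a b))\<^sup>2 = (norm a * norm b)\<^sup>2"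
    unfolding power_mult_distrib power2_norm_mat power2_norm_vec outer_prod_def
    by (simp add: power_mult_distrib sum_product)
  thus ?thesis by (simp add: power2_eq_iff_nonneg)
qed

lemma inner_outer_prod: "T \<bullet> outer_prod a b = (a v* T) \<bullet> b"
  unfolding inner_vec_def outer_prod_def vector_matrix_mult_def
  by (simp add: sum_distrib_right sum_distrib_left algebra_simps) (rule sum.swap)

lemma vector_matrix_mult_outer_prod: "e v* outer_prod a b = (e \<bullet> a) *\<^sub>R b"
  unfolding vec_eq_iff vector_matrix_mult_def outer_prod_def inner_vec_def
  by (simp add: sum_distrib_left mult_ac)

lemma vector_matrix_mult_sum: "x v* sum f K = (\<Sum>k\<in>K. x v* f k)"
  by (induction K rule: infinite_finite_induct) (simp_all add: vector_matrix_mult_add_rdistrib)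

lemma power2_norm_diff_scaleR_unit:
  fixes x n :: "'a::real_inner"
  assumes "norm n = 1"
  shows "(norm (x - q *\<^sub>R n))\<^sup>2 = (norm x)\<^sup>2 - (x \<bullet> n)\<^sup>2 + (q - x \<bullet> n)\<^sup>2"
proof -
  have "n \<bullet> n = 1" using assms by (simp add: power2_norm_eq_inner[symmetric])
  thus ?thesis unfolding power2_norm_eq_inner
    by (simp add: inner_diff_left inner_diff_right inner_commute power2_eq_square algebra_simps)
qed

lemma power2_norm_diff_outer_prod_unit:
  assumes "norm n = 1"
  shows "(norm (T - outer_prod n w))\<^sup>2 = (norm T)\<^sup>2 - (norm (n v* T))\<^sup>2 + (norm (w - n v* T))\<^sup>2"
proof -
  have "(norm (outer_prod n w))\<^sup>2 = w \<bullet> w" using assms by (simp add: norm_outer_prod power2_norm_eq_inner)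
  thus ?thesis unfolding power2_norm_eq_inner
    by (simp add: inner_diff_left inner_diff_right inner_commute inner_outer_prod algebra_simps)
qed

lemma
  fixes T :: "real^'n^'m" and c :: real
  assumes "T ** transpose T = c *\<^sub>R mat 1"
  shows power2_norm_vector_matrix_mult_conformal: "(norm (v v* T))\<^sup>2 = c * (norm v)\<^sup>2"
    and power2_norm_conformal: "(norm T)\<^sup>2 = of_nat CARD('m) * c"
proof -
  have "(norm (v v* T))\<^sup>2 = v \<bullet> ((T ** transpose T) *v v)"
    by (simp add: power2_norm_eq_inner dot_lmul_matrix matrix_vector_mul_assoc[symmetric])
  thus "(norm (v v* T))\<^sup>2 = c * (norm v)\<^sup>2"
    using assms by (simp add: power2_norm_eq_inner scaleR_matrix_vector_assoc[symmetric])
  have "(T ** transpose T) $ i $ i = (\<Sum>j\<in>UNIV. (T $ i $ j)\<^sup>2)" for i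
    by (simp add: matrix_matrix_mult_def transpose_def power2_eq_square)
  hence "(norm T)\<^sup>2 = (\<Sum>i\<in>UNIV. (T ** transpose T) $ i $ i)" by (simp add: power2_norm_mat)
  thus "(norm T)\<^sup>2 = of_nat CARD('m) * c" using assms by (simp add: mat_def)
qed

lemma exists_unit_vector_matrix_mult_ge:
  fixes T :: "real^'n^'m"
  assumes "norm a \<le> 1"
  obtains e where "norm e = 1" and "norm (a v* T) \<le> norm (e v* T)"
proof (cases "a = 0")
  case True
  with that[of "axis undefined 1"] show ?thesis by simp
next
  case False
  have "norm (a v* T) \<le> norm (a v* T) / norm a"
    using assms False by (simp add: le_divide_eq mult_left_le)
  also have "\<dots> = norm (((1 / norm a) *\<^sub>R a) v* T)" by (simp add: scaleR_vector_matrix_assoc)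
  finally show ?thesis using that[of "(1 / norm a) *\<^sub>R a"] False by simp
qed

lemma exists_unit_inner_eq_norm:
  fixes x :: "real^'n"
  obtains e where "norm e = 1" and "x \<bullet> e = norm x"
proof (cases "x = 0")
  case True
  with that show ?thesis using norm_axis_1 by fastforce
next
  case False
  with that[of "(1 / norm x) *\<^sub>R x"] show ?thesis
    by (simp add: power2_norm_eq_inner[symmetric] power2_eq_square)
qed

lemma norm_sum_scaleR_le:
  fixes f :: "'a \<Rightarrow> 'b::real_normed_vector"
  assumes "\<And>k. k \<in> K \<Longrightarrow> 0 \<le> w k \<and> norm (f k) \<le> 1"
  shows "norm (\<Sum>k\<in>K. w k *\<^sub>R f k) \<le> (\<Sum>k\<in>K. w k)"
proof -
  have "norm (\<Sum>k\<in>K. w k *\<^sub>R f k) \<le> (\<Sum>k\<in>K. norm (w k *\<^sub>R f k))" by (rule norm_sum)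
  also have "\<dots> \<le> (\<Sum>k\<in>K. w k)" using assms by (intro sum_mono) (simp add: mult_left_le)
  finally show ?thesis .
qed

lemma norm_le_imp_scaleR_unit_ball:
  fixes u :: "'a::real_normed_vector"
  assumes "norm u \<le> q"
  obtains r where "norm r \<le> 1" and "q *\<^sub>R r = u"
proof (cases "q = 0")
  case True
  with assms show ?thesis using that[of 0] by simp
next
  case False
  with assms have "0 < q" using norm_ge_zero[of u] by linarith
  with assms show ?thesis using that[of "(1 / q) *\<^sub>R u"] by (simp add: field_simps)
qed

lemma convex_combination_le_some_term:
  fixes f :: "nat \<Rightarrow> real"
  assumes "\<forall>k<n. 0 \<le> p k" and "(\<Sum>k<n. p k) = 1"
  obtains k where "k < n" and "(\<Sum>k<n. p k * f k) \<le> f k"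
proof -
  have "n \<noteq> 0" using assms(2) by (cases n) auto
  hence "Max (f ` {..<n}) \<in> f ` {..<n}" by (intro Max_in) auto
  then obtain k where k: "k < n" "f k = Max (f ` {..<n})" by auto
  have "f i \<le> f k" if "i < n" for i
    unfolding k(2) using that by (intro Max_ge) auto
  hence "(\<Sum>i<n. p i * f i) \<le> (\<Sum>i<n. p i * f k)"
    using assms(1) by (intro sum_mono mult_left_mono) auto
  hence "(\<Sum>i<n. p i * f i) \<le> f k" using assms(2) by (simp add: sum_distrib_right[symmetric])
  with k(1) that show ?thesis by blast
qed

section \<open>The Bloch ball of a qubit\<close>

definition qubit_state :: "real^3 \<Rightarrow> qop" where
  "qubit_state a = (1/2) *\<^sub>R (mat 1 + (\<Sum>i\<in>UNIV. (a $ i) *\<^sub>R pauli i))"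

definition bloch_vector :: "complex^2 \<Rightarrow> real^3" where
  "bloch_vector \<psi> = vector [2 * Re (cnj (\<psi> $ 1) * \<psi> $ 2), 2 * Im (cnj (\<psi> $ 1) * \<psi> $ 2),
     (cmod (\<psi> $ 1))\<^sup>2 - (cmod (\<psi> $ 2))\<^sup>2]"

definition op_bloch_vector :: "qop \<Rightarrow> real^3" where
  "op_bloch_vector A = vector [2 * Re (A $ 1 $ 2), - 2 * Im (A $ 1 $ 2), Re (A $ 1 $ 1) - Re (A $ 2 $ 2)]"

lemma pauli_entries:
  "pauli 1 $ 1 $ 1 = 0" "pauli 1 $ 1 $ 2 = 1" "pauli 1 $ 2 $ 1 = 1" "pauli 1 $ 2 $ 2 = 0"
  "pauli 2 $ 1 $ 1 = 0" "pauli 2 $ 1 $ 2 = -\<i>" "pauli 2 $ 2 $ 1 = \<i>" "pauli 2 $ 2 $ 2 = 0"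
  "pauli 3 $ 1 $ 1 = 1" "pauli 3 $ 1 $ 2 = 0" "pauli 3 $ 2 $ 1 = 0" "pauli 3 $ 2 $ 2 = -1"
  by (simp_all add: pauli_def)

lemma qubit_state_entries:
  "qubit_state a $ 1 $ 1 = (1 + a $ 3) / 2" "qubit_state a $ 1 $ 2 = (a $ 1 - \<i> * a $ 2) / 2"
  "qubit_state a $ 2 $ 1 = (a $ 1 + \<i> * a $ 2) / 2" "qubit_state a $ 2 $ 2 = (1 - a $ 3) / 2"
  by (simp_all add: qubit_state_def sum_3 pauli_entries mat_def)
    (simp_all add: scaleR_conv_of_real field_simps)

lemma qubit_state_add_neg: "qubit_state a + qubit_state (- a) = mat 1"
  by (simp add: vec_eq_iff forall_2 qubit_state_entries mat_def field_simps)

lemma hermitian_trace_one_eq_qubit_state: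
  assumes "hermitian_op A" and "tr_op A = 1"
  shows "A = qubit_state (op_bloch_vector A)"
proof -
  have "A $ 2 $ 1 = cnj (A $ 1 $ 2)" "Im (A $ 1 $ 1) = 0" "Im (A $ 2 $ 2) = 0"
    using assms(1) unfolding hermitian_op_def by (metis cnj.sel(2) neg_equal_zero)+
  moreover have "Re (A $ 1 $ 1) + Re (A $ 2 $ 2) = 1"
    using arg_cong[OF assms(2), of Re] by (simp add: tr_op_def sum_2)
  ultimately show ?thesis
    by (simp add: vec_eq_iff forall_2 qubit_state_entries op_bloch_vector_def complex_eq_iff field_simps)
qed

lemma quadratic_form_qubit_state:
  "(\<Sum>i\<in>UNIV. \<Sum>j\<in>UNIV. cnj (v $ i) * qubit_state a $ i $ j * v $ j)
     = of_real (((cmod (v $ 1))\<^sup>2 + (cmod (v $ 2))\<^sup>2 + a \<bullet> bloch_vector v) / 2)"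
proof -
  obtain p q r s where v: "v $ 1 = Complex p q" "v $ 2 = Complex r s" by (meson complex.exhaust_sel)
  show ?thesis
    by (simp add: sum_2 qubit_state_entries bloch_vector_def inner_vec_def sum_3 v cmod_power2
        complex_eq_iff) (simp add: field_simps power2_eq_square)
qed

lemma norm_bloch_vector: "norm (bloch_vector v) = (cmod (v $ 1))\<^sup>2 + (cmod (v $ 2))\<^sup>2"
proof -
  obtain p q r s where v: "v $ 1 = Complex p q" "v $ 2 = Complex r s" by (meson complex.exhaust_sel)
  have "(norm (bloch_vector v))\<^sup>2 = ((cmod (v $ 1))\<^sup>2 + (cmod (v $ 2))\<^sup>2)\<^sup>2"
    unfolding power2_norm_vec3 by (simp add: bloch_vector_def v cmod_power2) algebra
  thus ?thesis by (simp add: power2_eq_iff_nonneg)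
qed

lemma cinner2_self: "cinner2 \<psi> \<psi> = of_real (norm (bloch_vector \<psi>))"
  by (simp add: norm_bloch_vector cinner2_def sum_2 complex_norm_square mult.commute del: of_real_power)

lemma density_qubit_state:
  assumes "norm a \<le> 1"
  shows "density (qubit_state a)"
proof -
  have "0 \<le> (cmod (v $ 1))\<^sup>2 + (cmod (v $ 2))\<^sup>2 + a \<bullet> bloch_vector v" for v
  proof -
    have "- (a \<bullet> bloch_vector v) \<le> norm a * norm (bloch_vector v)"
      using norm_cauchy_schwarz[of "- a" "bloch_vector v"] by simp
    also have "\<dots> \<le> norm (bloch_vector v)" using assms by (simp add: mult_left_le_one_le)
    finally show ?thesis by (simp add: norm_bloch_vector)
  qed
  hence "psd_op (qubit_state a)" unfolding psd_op_def quadratic_form_qubit_state by simp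
  moreover have "hermitian_op (qubit_state a)"
    unfolding hermitian_op_def forall_2 by (simp add: qubit_state_entries complex_eq_iff)
  moreover have "tr_op (qubit_state a) = 1"
    unfolding tr_op_def sum_2 by (simp add: qubit_state_entries field_simps)
  ultimately show ?thesis unfolding density_def by simp
qed

lemma unit_eq_bloch_vector:
  assumes "norm e = 1"
  obtains \<psi> where "cinner2 \<psi> \<psi> = 1" and "bloch_vector \<psi> = e"
proof -
  have e: "(e $ 1)\<^sup>2 + (e $ 2)\<^sup>2 + (e $ 3)\<^sup>2 = 1" using assms by (simp add: power2_norm_vec3[symmetric])
  have normalized: "cinner2 \<psi> \<psi> = 1" if "norm (bloch_vector \<psi>) = 1" for \<psi>
    using that by (simp add: cinner2_self)
  show ?thesis
  proof (cases "e $ 3 = -1")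
    case True
    with e have "e $ 1 = 0" "e $ 2 = 0" by simp_all
    with True have "bloch_vector (vector [0, 1]) = e"
      by (simp add: bloch_vector_def vec_eq_iff forall_3)
    with assms normalized show ?thesis using that by blast
  next
    case False
    have "\<bar>e $ 3\<bar> \<le> 1" using component_le_norm_cart[of e 3] assms by simp
    with False have pos: "0 < 1 + e $ 3" by simp
    define s where "s = sqrt ((1 + e $ 3) / 2)"
    have s: "0 < s" "s\<^sup>2 = (1 + e $ 3) / 2" using pos by (simp_all add: s_def)
    define \<psi> :: "complex^2" where "\<psi> = vector [of_real s, Complex (e $ 1 / (2 * s)) (e $ 2 / (2 * s))]"
    have "(cmod (\<psi> $ 2))\<^sup>2 = ((e $ 1)\<^sup>2 + (e $ 2)\<^sup>2) / (4 * s\<^sup>2)"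
      by (simp add: \<psi>_def cmod_power2 power_divide power_mult_distrib add_divide_distrib)
    also have "\<dots> = (1 - e $ 3) / 2"
      using e pos unfolding s(2) by (simp add: field_simps) (simp add: power2_eq_square algebra_simps)
    finally have "(cmod (\<psi> $ 2))\<^sup>2 = (1 - e $ 3) / 2" .
    moreover have "(cmod (\<psi> $ 1))\<^sup>2 = (1 + e $ 3) / 2" using s by (simp add: \<psi>_def)
    moreover have "cnj (\<psi> $ 1) * \<psi> $ 2 = Complex (e $ 1 / 2) (e $ 2 / 2)"
      using s(1) by (simp add: \<psi>_def complex_eq_iff)
    ultimately have "bloch_vector \<psi> = e"
      by (simp add: bloch_vector_def vec_eq_iff forall_3 field_simps)
    with assms normalized show ?thesis using that by blast
  qed
qed

lemma
  assumes "density A"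
  shows density_eq_qubit_state: "A = qubit_state (op_bloch_vector A)"
    and norm_op_bloch_vector_le: "norm (op_bloch_vector A) \<le> 1"
proof -
  define a where "a = op_bloch_vector A"
  show A: "A = qubit_state (op_bloch_vector A)"
    using hermitian_trace_one_eq_qubit_state assms unfolding density_def by blast
  show "norm (op_bloch_vector A) \<le> 1"
  proof (cases "a = 0")
    case False
    then obtain \<psi> where \<psi>: "cinner2 \<psi> \<psi> = 1" "bloch_vector \<psi> = - (1 / norm a) *\<^sub>R a"
      using unit_eq_bloch_vector[of "- (1 / norm a) *\<^sub>R a"] by auto
    have "0 \<le> Re (\<Sum>i\<in>UNIV. \<Sum>j\<in>UNIV. cnj (\<psi> $ i) * A $ i $ j * \<psi> $ j)"
      using assms unfolding density_def psd_op_def by blast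
    also have "\<dots> = (norm (bloch_vector \<psi>) + a \<bullet> bloch_vector \<psi>) / 2"
      by (subst A) (simp add: a_def quadratic_form_qubit_state norm_bloch_vector)
    also have "\<dots> = (1 - norm a) / 2"
      using \<psi> False by (simp add: cinner2_self inner_commute[of a] power2_norm_eq_inner[symmetric]
          power2_eq_square)
    finally show ?thesis by (simp add: a_def)
  qed (simp add: a_def)
qed

lemma proj_eq_qubit_state:
  assumes "cinner2 \<psi> \<psi> = 1"
  shows "proj \<psi> = qubit_state (bloch_vector \<psi>)"
proof -
  have "norm (bloch_vector \<psi>) = 1" using assms by (simp add: cinner2_self)
  hence "(cmod (\<psi> $ 1))\<^sup>2 + (cmod (\<psi> $ 2))\<^sup>2 = 1" by (simp add: norm_bloch_vector)
  thus ?thesis unfolding cmod_power2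
    by (simp add: vec_eq_iff forall_2 proj_def qubit_state_entries bloch_vector_def complex_eq_iff
        cmod_power2 field_simps) (simp add: power2_eq_square)
qed

lemma proj_add_orthogonal:
  assumes "cinner2 \<psi> \<psi> = 1" and "cinner2 \<phi> \<phi> = 1" and "cinner2 \<psi> \<phi> = 0"
  shows "proj \<psi> + proj \<phi> = mat 1"
proof -
  define a b c d where "a = \<psi> $ 1" "b = \<psi> $ 2" "c = \<phi> $ 1" "d = \<phi> $ 2"
  have h: "cnj a * a + cnj b * b = 1" "cnj c * c + cnj d * d = 1" "cnj a * c + cnj b * d = 0"
    using assms by (simp_all add: cinner2_def sum_2 a_b_c_d_def)
  \<comment> \<open>In dimension two the orthogonal unit vector is determined up to a unimodular factor.\<close>
  define l where "l = a * d - b * c"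
  have c: "c = - l * cnj b" and d: "d = l * cnj a" unfolding l_def using h(1,3) by algebra+
  have "l * cnj l = 1" using h(2)[unfolded c d] h(1) by (simp add: algebra_simps) algebra
  hence "a * cnj a + c * cnj c = 1 \<and> b * cnj b + d * cnj d = 1 \<and>
      a * cnj b + c * cnj d = 0 \<and> b * cnj a + d * cnj c = 0"
    unfolding c d using h(1) by (simp add: algebra_simps) algebra
  thus ?thesis by (simp add: vec_eq_iff forall_2 proj_def mat_def a_b_c_d_def)
qed

lemma orthogonal_unit_exists:
  assumes "cinner2 \<psi> \<psi> = 1"
  obtains \<phi> where "cinner2 \<phi> \<phi> = 1" and "cinner2 \<psi> \<phi> = 0"
proof
  define \<phi> :: "complex^2" where "\<phi> = vector [- cnj (\<psi> $ 2), cnj (\<psi> $ 1)]"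
  show "cinner2 \<phi> \<phi> = 1" using assms by (simp add: cinner2_def sum_2 \<phi>_def algebra_simps)
  show "cinner2 \<psi> \<phi> = 0" by (simp add: cinner2_def sum_2 \<phi>_def algebra_simps)
qed

section \<open>Bloch representation of two-qubit operators\<close>

lemma sum_UNIV_2x2: "sum f (UNIV::(2\<times>2) set) = f (1,1) + f (1,2) + f (2,1) + f (2,2)"
  by (simp add: UNIV_Times_UNIV[symmetric] sum.cartesian_product' sum_2 add.assoc del: UNIV_Times_UNIV)

lemma qqop_eq_iff:
  "(A::qqop) = B \<longleftrightarrow> (\<forall>r1 r2 c1 c2. A $ (r1,r2) $ (c1,c2) = B $ (r1,r2) $ (c1,c2))"
  by (auto simp: vec_eq_iff)

lemma bloch_state_entry:
  "bloch_state x y T $ r $ c = (1/4) * (mat 1 $ fst r $ fst c * mat 1 $ snd r $ snd c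
     + (\<Sum>i\<in>UNIV. of_real (x $ i) * pauli i $ fst r $ fst c * mat 1 $ snd r $ snd c)
     + (\<Sum>j\<in>UNIV. of_real (y $ j) * mat 1 $ fst r $ fst c * pauli j $ snd r $ snd c)
     + (\<Sum>i\<in>UNIV. \<Sum>j\<in>UNIV. of_real (T $ i $ j) * pauli i $ fst r $ fst c * pauli j $ snd r $ snd c))"
  by (simp add: bloch_state_def kron_def sum_component) (simp add: scaleR_conv_of_real mult.assoc)

lemma hs_dist2_bloch_state:
  "hs_dist2 (bloch_state x y T) (bloch_state x' y' T') =
     ((norm (x - x'))\<^sup>2 + (norm (y - y'))\<^sup>2 + (norm (T - T'))\<^sup>2) / 4"
  unfolding hs_dist2_def bloch_state_entry sum_UNIV_2x2 power2_norm_vec power2_norm_mat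
  by (simp add: sum_3 pauli_entries mat_def cmod_power2 algebra_simps)
    (simp add: power2_eq_square field_simps)

lemma bloch_state_inj:
  assumes "bloch_state x y T = bloch_state x' y' T'"
  shows "x = x'" and "y = y'" and "T = T'"
proof -
  have "(norm (x - x'))\<^sup>2 + (norm (y - y'))\<^sup>2 + (norm (T - T'))\<^sup>2 = 0"
    using hs_dist2_bloch_state[of x y T x' y' T'] assms by (simp add: hs_dist2_def)
  thus "x = x'" "y = y'" "T = T'" by (simp_all add: add_nonneg_eq_0_iff)
qed

lemma kron_qubit_state: "kron (qubit_state a) (qubit_state b) = bloch_state a b (outer_prod a b)"
  unfolding qqop_eq_iff forall_2 kron_def bloch_state_entry
  by (simp add: qubit_state_entries sum_3 pauli_entries mat_def outer_prod_def)
    (simp_all add: complex_eq_iff algebra_simps)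

lemma bloch_state_add:
  "bloch_state (x + x') (y + y') (T + T') = bloch_state x y T + bloch_state x' y' T' - bloch_state 0 0 0"
  unfolding qqop_eq_iff forall_2
  by (simp add: bloch_state_entry sum_3 pauli_entries mat_def) (simp_all add: complex_eq_iff field_simps)

lemma bloch_state_scaleR:
  "bloch_state (c *\<^sub>R x) (c *\<^sub>R y) (c *\<^sub>R T) = c *\<^sub>R bloch_state x y T + (1 - c) *\<^sub>R bloch_state 0 0 0"
  unfolding qqop_eq_iff forall_2
  by (simp add: bloch_state_entry sum_3 pauli_entries mat_def) (simp_all add: complex_eq_iff field_simps)

lemma bloch_state_convex2:
  assumes "p + q = 1"
  shows "p *\<^sub>R bloch_state x y T + q *\<^sub>R bloch_state x' y' T'
    = bloch_state (p *\<^sub>R x + q *\<^sub>R x') (p *\<^sub>R y + q *\<^sub>R y') (p *\<^sub>R T + q *\<^sub>R T')"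
  unfolding bloch_state_add bloch_state_scaleR using assms
  by (simp add: algebra_simps) (metis scaleR_add_left scaleR_one)

lemma bloch_state_convex_sum:
  fixes n :: nat
  assumes "(\<Sum>k<n. p k) = 1"
  shows "(\<Sum>k<n. p k *\<^sub>R bloch_state (u k) (v k) (W k))
    = bloch_state (\<Sum>k<n. p k *\<^sub>R u k) (\<Sum>k<n. p k *\<^sub>R v k) (\<Sum>k<n. p k *\<^sub>R W k)"
proof -
  \<comment> \<open>The term bloch_state 0 0 0 absorbs the missing weight, so the induction needs no normalisation.\<close>
  have "(\<Sum>k<n. p k *\<^sub>R bloch_state (u k) (v k) (W k)) + (1 - (\<Sum>k<n. p k)) *\<^sub>R bloch_state 0 0 0
    = bloch_state (\<Sum>k<n. p k *\<^sub>R u k) (\<Sum>k<n. p k *\<^sub>R v k) (\<Sum>k<n. p k *\<^sub>R W k)"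
  proof (induction n)
    case (Suc n)
    show ?case
      unfolding sum.lessThan_Suc bloch_state_add bloch_state_scaleR Suc.IH[symmetric]
      by (simp add: algebra_simps)
  qed simp
  with assms show ?thesis by simp
qed

section \<open>Separable and classical-quantum states\<close>

definition product_ensemble :: "nat \<Rightarrow> (nat \<Rightarrow> real) \<Rightarrow> (nat \<Rightarrow> real^3) \<Rightarrow> (nat \<Rightarrow> real^3) \<Rightarrow> bool" where
  "product_ensemble n p a b \<longleftrightarrow>
     (\<forall>k<n. 0 \<le> p k \<and> norm (a k) \<le> 1 \<and> norm (b k) \<le> 1) \<and> (\<Sum>k<n. p k) = 1"

lemma separable_iff_product_ensemble:
  "separable \<sigma> \<longleftrightarrow> (\<exists>(n::nat) p a b. product_ensemble n p a b \<and>
     \<sigma> = bloch_state (\<Sum>k<n. p k *\<^sub>R a k) (\<Sum>k<n. p k *\<^sub>R b k) (\<Sum>k<n. p k *\<^sub>R outer_prod (a k) (b k)))"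
proof
  assume sep: "separable \<sigma>"
  obtain n :: nat and p A B where h: "\<forall>k<n. 0 \<le> p k \<and> density (A k) \<and> density (B k)"
    and p: "(\<Sum>k<n. p k) = 1" and \<sigma>: "\<sigma> = (\<Sum>k<n. p k *\<^sub>R kron (A k) (B k))"
    using sep unfolding separable_def by blast
  define a b where "a k = op_bloch_vector (A k)" and "b k = op_bloch_vector (B k)" for k
  have ab: "norm (a k) \<le> 1 \<and> A k = qubit_state (a k)" "norm (b k) \<le> 1 \<and> B k = qubit_state (b k)"
    if "k < n" for k
    using h that density_eq_qubit_state norm_op_bloch_vector_le unfolding a_def b_def by blast+
  have "\<sigma> = (\<Sum>k<n. p k *\<^sub>R bloch_state (a k) (b k) (outer_prod (a k) (b k)))"
    unfolding \<sigma> using ab by (intro sum.cong) (simp_all add: kron_qubit_state)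
  with p have "\<sigma> = bloch_state (\<Sum>k<n. p k *\<^sub>R a k) (\<Sum>k<n. p k *\<^sub>R b k) (\<Sum>k<n. p k *\<^sub>R outer_prod (a k) (b k))"
    by (simp add: bloch_state_convex_sum)
  moreover have "product_ensemble n p a b" using h ab p unfolding product_ensemble_def by simp
  ultimately show "\<exists>(n::nat) p a b. product_ensemble n p a b \<and>
     \<sigma> = bloch_state (\<Sum>k<n. p k *\<^sub>R a k) (\<Sum>k<n. p k *\<^sub>R b k) (\<Sum>k<n. p k *\<^sub>R outer_prod (a k) (b k))"
    by blast
next
  assume "\<exists>(n::nat) p a b. product_ensemble n p a b \<and>
     \<sigma> = bloch_state (\<Sum>k<n. p k *\<^sub>R a k) (\<Sum>k<n. p k *\<^sub>R b k) (\<Sum>k<n. p k *\<^sub>R outer_prod (a k) (b k))"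
  then obtain n p a b where h: "product_ensemble n p a b"
    and \<sigma>: "\<sigma> = bloch_state (\<Sum>k<n. p k *\<^sub>R a k) (\<Sum>k<n. p k *\<^sub>R b k) (\<Sum>k<n. p k *\<^sub>R outer_prod (a k) (b k))"
    by blast
  have "\<sigma> = (\<Sum>k<n. p k *\<^sub>R kron (qubit_state (a k)) (qubit_state (b k)))"
    using h unfolding \<sigma> kron_qubit_state product_ensemble_def by (simp add: bloch_state_convex_sum)
  moreover have "\<forall>k<n. 0 \<le> p k \<and> density (qubit_state (a k)) \<and> density (qubit_state (b k))"
    using h density_qubit_state unfolding product_ensemble_def by blast
  ultimately show "separable \<sigma>"
    using h unfolding separable_def product_ensemble_def
    by (intro exI[of _ n] exI[of _ p] exI[of _ "\<lambda>k. qubit_state (a k)"] exI[of _ "\<lambda>k. qubit_state (b k)"])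
      simp
qed

lemma separable_bloch_stateE:
  assumes "separable (bloch_state x y T)"
  obtains n p a b where "product_ensemble n p a b" and "x = (\<Sum>k<n. p k *\<^sub>R a k)"
    and "y = (\<Sum>k<n. p k *\<^sub>R b k)" and "T = (\<Sum>k<n. p k *\<^sub>R outer_prod (a k) (b k))"
proof -
  obtain n p a b where ens: "product_ensemble n p a b" and eq:
    "bloch_state x y T = bloch_state (\<Sum>k<n. p k *\<^sub>R a k) (\<Sum>k<n. p k *\<^sub>R b k) (\<Sum>k<n. p k *\<^sub>R outer_prod (a k) (b k))"
    using assms unfolding separable_iff_product_ensemble by blast
  with bloch_state_inj[OF eq] show ?thesis by (intro that)
qed

lemma product_ensemble_norm_le:
  assumes "product_ensemble n p a b"
  shows "norm (\<Sum>k<n. p k *\<^sub>R a k) \<le> 1" and "norm (\<Sum>k<n. p k *\<^sub>R outer_prod (a k) (b k)) \<le> 1"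
proof -
  have k: "0 \<le> p k \<and> norm (a k) \<le> 1" "0 \<le> p k \<and> norm (outer_prod (a k) (b k)) \<le> 1"
    if "k \<in> {..<n}" for k
    using assms that by (auto simp: product_ensemble_def norm_outer_prod mult_le_one)
  have "(\<Sum>k<n. p k) = 1" using assms by (simp add: product_ensemble_def)
  moreover have "norm (\<Sum>k<n. p k *\<^sub>R a k) \<le> (\<Sum>k<n. p k)"
    by (rule norm_sum_scaleR_le) (rule k(1))
  moreover have "norm (\<Sum>k<n. p k *\<^sub>R outer_prod (a k) (b k)) \<le> (\<Sum>k<n. p k)"
    by (rule norm_sum_scaleR_le) (rule k(2))
  ultimately show "norm (\<Sum>k<n. p k *\<^sub>R a k) \<le> 1"
    and "norm (\<Sum>k<n. p k *\<^sub>R outer_prod (a k) (b k)) \<le> 1"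
    by simp_all
qed

lemma separable_mixture2:
  assumes "0 \<le> p" and "0 \<le> q" and "p + q = 1"
    and "norm a \<le> 1" and "norm b \<le> 1" and "norm a' \<le> 1" and "norm b' \<le> 1"
  shows "separable (p *\<^sub>R kron (qubit_state a) (qubit_state b) + q *\<^sub>R kron (qubit_state a') (qubit_state b'))"
proof -
  define w A B where "w k = (if k = 0 then p else q)"
    and "A k = (if k = 0 then qubit_state a else qubit_state a')"
    and "B k = (if k = 0 then qubit_state b else qubit_state b')" for k :: nat
  have "\<forall>k<2. 0 \<le> w k \<and> density (A k) \<and> density (B k)"
    using assms by (simp add: w_def A_def B_def density_qubit_state)
  moreover have "(\<Sum>k<2. w k) = 1"
    using assms(3) by (simp add: w_def numeral_2_eq_2)
  moreover have "p *\<^sub>R kron (qubit_state a) (qubit_state b) + q *\<^sub>R kron (qubit_state a') (qubit_state b')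
      = (\<Sum>k<2. w k *\<^sub>R kron (A k) (B k))"
    by (simp add: w_def A_def B_def numeral_2_eq_2)
  ultimately show ?thesis unfolding separable_def by blast
qed

lemma CQ_states_bloch_form:
  assumes "X \<in> CQ_states"
  obtains n q y w where "norm n = 1" and "X = bloch_state (q *\<^sub>R n) y (outer_prod n w)"
proof -
  obtain p0 p1 \<psi>0 \<psi>1 \<rho>0 \<rho>1 where X: "X = p0 *\<^sub>R kron (proj \<psi>0) \<rho>0 + p1 *\<^sub>R kron (proj \<psi>1) \<rho>1"
    and p: "p0 + p1 = 1"
    and \<psi>: "cinner2 \<psi>0 \<psi>0 = 1" "cinner2 \<psi>1 \<psi>1 = 1" "cinner2 \<psi>0 \<psi>1 = 0"
    and \<rho>: "density \<rho>0" "density \<rho>1"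
    using assms unfolding CQ_states_def by blast
  define n where "n = bloch_vector \<psi>0"
  have "norm n = 1" using \<psi>(1) by (simp add: n_def cinner2_self)
  have proj0: "proj \<psi>0 = qubit_state n" using \<psi>(1) by (simp add: n_def proj_eq_qubit_state)
  have proj1: "proj \<psi>1 = qubit_state (- n)"
    using proj_add_orthogonal[OF \<psi>] qubit_state_add_neg[of n] proj0 by (metis add_left_cancel)
  define r0 r1 where "r0 = op_bloch_vector \<rho>0" and "r1 = op_bloch_vector \<rho>1"
  have r: "\<rho>0 = qubit_state r0" "\<rho>1 = qubit_state r1"
    using \<rho> density_eq_qubit_state unfolding r0_def r1_def by blast+
  have "p0 *\<^sub>R outer_prod n r0 + p1 *\<^sub>R outer_prod (- n) r1 = outer_prod n (p0 *\<^sub>R r0 - p1 *\<^sub>R r1)"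
    by (simp add: vec_eq_iff outer_prod_def algebra_simps)
  hence "X = bloch_state ((p0 - p1) *\<^sub>R n) (p0 *\<^sub>R r0 + p1 *\<^sub>R r1) (outer_prod n (p0 *\<^sub>R r0 - p1 *\<^sub>R r1))"
    unfolding X proj0 proj1 r kron_qubit_state bloch_state_convex2[OF p]
    by (simp add: scaleR_diff_left)
  with \<open>norm n = 1\<close> that show ?thesis by blast
qed

lemma bloch_state_axis_in_CQ_states:
  assumes e: "norm e = 1" and "norm (y + t) \<le> 1 + c" and "norm (y - t) \<le> 1 - c"
  shows "bloch_state (c *\<^sub>R e) y (outer_prod e t) \<in> CQ_states"
proof -
  obtain \<psi>0 where \<psi>0: "cinner2 \<psi>0 \<psi>0 = 1" "bloch_vector \<psi>0 = e" using unit_eq_bloch_vector[OF e] .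
  obtain \<psi>1 where \<psi>1: "cinner2 \<psi>1 \<psi>1 = 1" "cinner2 \<psi>0 \<psi>1 = 0" using orthogonal_unit_exists[OF \<psi>0(1)] .
  have proj0: "proj \<psi>0 = qubit_state e" using \<psi>0 by (simp add: proj_eq_qubit_state)
  have proj1: "proj \<psi>1 = qubit_state (- e)"
    using proj_add_orthogonal[OF \<psi>0(1) \<psi>1] qubit_state_add_neg[of e] proj0 by (metis add_left_cancel)
  define p0 p1 where "p0 = (1 + c) / 2" and "p1 = (1 - c) / 2"
  have "norm ((1/2) *\<^sub>R (y + t)) \<le> p0" "norm ((1/2) *\<^sub>R (y - t)) \<le> p1"
    using assms by (simp_all add: p0_def p1_def)
  then obtain r0 r1 where r: "norm r0 \<le> 1" "p0 *\<^sub>R r0 = (1/2) *\<^sub>R (y + t)"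
    "norm r1 \<le> 1" "p1 *\<^sub>R r1 = (1/2) *\<^sub>R (y - t)"
    by (metis norm_le_imp_scaleR_unit_ball)
  have "0 \<le> 1 + c" "0 \<le> 1 - c" using assms(2,3) norm_ge_zero[of "y + t"] norm_ge_zero[of "y - t"] by linarith+
  hence p: "0 \<le> p0" "0 \<le> p1" "p0 + p1 = 1" by (simp_all add: p0_def p1_def field_simps)
  have eq: "bloch_state (c *\<^sub>R e) y (outer_prod e t)
      = p0 *\<^sub>R kron (proj \<psi>0) (qubit_state r0) + p1 *\<^sub>R kron (proj \<psi>1) (qubit_state r1)"
  proof -
    have "p0 *\<^sub>R e + p1 *\<^sub>R (- e) = c *\<^sub>R e"
      by (simp add: p0_def p1_def vec_eq_iff field_simps)
    moreover have "p0 *\<^sub>R r0 + p1 *\<^sub>R r1 = y"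
      unfolding r(2,4) by (simp add: vec_eq_iff field_simps)
    moreover have "p0 *\<^sub>R outer_prod e r0 + p1 *\<^sub>R outer_prod (- e) r1 = outer_prod e t"
    proof -
      have "p0 *\<^sub>R r0 - p1 *\<^sub>R r1 = t" unfolding r(2,4) by (simp add: vec_eq_iff field_simps)
      moreover have "p0 *\<^sub>R outer_prod e r0 + p1 *\<^sub>R outer_prod (- e) r1
          = outer_prod e (p0 *\<^sub>R r0 - p1 *\<^sub>R r1)"
        by (simp add: vec_eq_iff outer_prod_def algebra_simps)
      ultimately show ?thesis by simp
    qed
    ultimately show ?thesis
      unfolding proj0 proj1 kron_qubit_state bloch_state_convex2[OF p(3)] by argo
  qed
  show ?thesis
    unfolding eq CQ_states_def mem_Collect_eq using p \<psi>0(1) \<psi>1 r(1,3)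
    by (intro exI[of _ p0] exI[of _ p1] exI[of _ \<psi>0] exI[of _ \<psi>1] exI[of _ "qubit_state r0"]
        exI[of _ "qubit_state r1"]) (simp add: density_qubit_state)
qed

lemma CQ_states_nonempty: "CQ_states \<noteq> {}"
  using bloch_state_axis_in_CQ_states[of "axis 1 1" 0 0 0] by auto

section \<open>Bounds on the geometric discord\<close>

lemma geom_discord_le_hs_dist2:
  assumes "X \<in> CQ_states"
  shows "geom_discord \<rho> \<le> 2 * hs_dist2 \<rho> X"
proof -
  have "Inf (hs_dist2 \<rho> ` CQ_states) \<le> hs_dist2 \<rho> X"
    by (rule cInf_lower) (use assms in \<open>auto intro: bdd_belowI[of _ 0] simp: hs_dist2_def sum_nonneg\<close>)
  thus ?thesis unfolding geom_discord_def by simp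
qed

lemma geom_discord_bloch_state_ge:
  assumes "\<And>n. norm n = 1 \<Longrightarrow> m \<le> ((norm x)\<^sup>2 - (x \<bullet> n)\<^sup>2 + (norm T)\<^sup>2 - (norm (n v* T))\<^sup>2) / 2"
  shows "m \<le> geom_discord (bloch_state x y T)"
proof -
  have "m / 2 \<le> hs_dist2 (bloch_state x y T) X" if CQ: "X \<in> CQ_states" for X
  proof -
    obtain n q y' w where n: "norm n = 1" and X: "X = bloch_state (q *\<^sub>R n) y' (outer_prod n w)"
      using CQ_states_bloch_form[OF CQ] .
    have "m / 2 \<le> ((norm x)\<^sup>2 - (x \<bullet> n)\<^sup>2 + (norm T)\<^sup>2 - (norm (n v* T))\<^sup>2) / 4"
      using assms[OF n] by simp
    also have "\<dots> \<le> hs_dist2 (bloch_state x y T) X"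
      unfolding X hs_dist2_bloch_state power2_norm_diff_scaleR_unit[OF n]
        power2_norm_diff_outer_prod_unit[OF n] by simp
    finally show ?thesis .
  qed
  hence "m / 2 \<le> Inf (hs_dist2 (bloch_state x y T) ` CQ_states)"
    using CQ_states_nonempty by (intro cInf_greatest) auto
  thus ?thesis unfolding geom_discord_def by simp
qed

lemma geom_discord_product_ensemble_le:
  assumes ens: "product_ensemble n p a b" and e: "norm e = 1"
    and x: "x = (\<Sum>k<n. p k *\<^sub>R a k)" and y: "y = (\<Sum>k<n. p k *\<^sub>R b k)"
    and T: "T = (\<Sum>k<n. p k *\<^sub>R outer_prod (a k) (b k))"
  shows "geom_discord (bloch_state x y T) \<le> ((norm x)\<^sup>2 - (x \<bullet> e)\<^sup>2 + (norm T)\<^sup>2 - (norm (e v* T))\<^sup>2) / 2"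
proof -
  define t c where "t = e v* T" and "c = x \<bullet> e"
  have t: "t = (\<Sum>k<n. (p k * (e \<bullet> a k)) *\<^sub>R b k)"
    by (simp add: t_def T vector_matrix_mult_sum vector_scaleR_matrix_ac vector_matrix_mult_outer_prod)
  have c: "c = (\<Sum>k<n. p k * (e \<bullet> a k))"
    unfolding c_def x inner_sum_left by (rule sum.cong) (simp_all add: inner_commute)
  \<comment> \<open>(y + t) / (1 + c) and (y - t) / (1 - c) are the Bloch vectors of the second qubit
    conditioned on the outcomes e and -e of measuring the first one.\<close>
  have bound: "norm (y + s *\<^sub>R t) \<le> 1 + s * c" if s: "\<bar>s\<bar> = 1" for s
  proof -
    have w: "0 \<le> p k * (1 + s * (e \<bullet> a k)) \<and> norm (b k) \<le> 1" if "k \<in> {..<n}" for k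
    proof -
      have "norm (a k) \<le> 1" using ens that by (simp add: product_ensemble_def)
      hence "\<bar>s * (e \<bullet> a k)\<bar> \<le> 1" using Cauchy_Schwarz_ineq2[of e "a k"] e s by (simp add: abs_mult)
      thus ?thesis using ens that by (simp add: product_ensemble_def abs_le_iff)
    qed
    have "y + s *\<^sub>R t = (\<Sum>k<n. (p k * (1 + s * (e \<bullet> a k))) *\<^sub>R b k)"
      by (simp add: y t scaleR_sum_right sum.distrib[symmetric] algebra_simps)
    also have "norm \<dots> \<le> (\<Sum>k<n. p k * (1 + s * (e \<bullet> a k)))"
      using w by (rule norm_sum_scaleR_le)
    also have "\<dots> = 1 + s * c"
      using ens by (simp add: c product_ensemble_def algebra_simps sum.distrib sum_distrib_left)
    finally show ?thesis .
  qed
  have "bloch_state (c *\<^sub>R e) y (outer_prod e t) \<in> CQ_states"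
    using bloch_state_axis_in_CQ_states[OF e] bound[of 1] bound[of "-1"] by simp
  hence "geom_discord (bloch_state x y T) \<le> 2 * hs_dist2 (bloch_state x y T) (bloch_state (c *\<^sub>R e) y (outer_prod e t))"
    by (rule geom_discord_le_hs_dist2)
  also have "\<dots> = ((norm x)\<^sup>2 - c\<^sup>2 + (norm T)\<^sup>2 - (norm t)\<^sup>2) / 2"
    unfolding hs_dist2_bloch_state power2_norm_diff_scaleR_unit[OF e] power2_norm_diff_outer_prod_unit[OF e]
    by (simp add: c_def t_def)
  finally show ?thesis by (simp add: c_def t_def)
qed

lemma separable_geom_discord_le_one:
  assumes "separable \<sigma>"
  shows "geom_discord \<sigma> \<le> 1"
proof -
  obtain n p a b where ens: "product_ensemble n p a b"
    and \<sigma>: "\<sigma> = bloch_state (\<Sum>k<n. p k *\<^sub>R a k) (\<Sum>k<n. p k *\<^sub>R b k) (\<Sum>k<n. p k *\<^sub>R outer_prod (a k) (b k))"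
    using assms unfolding separable_iff_product_ensemble by blast
  let ?x = "\<Sum>k<n. p k *\<^sub>R a k" and ?T = "\<Sum>k<n. p k *\<^sub>R outer_prod (a k) (b k)"
  have "geom_discord \<sigma> \<le> ((norm ?x)\<^sup>2 - (?x \<bullet> axis 1 1)\<^sup>2 + (norm ?T)\<^sup>2 - (norm (axis 1 1 v* ?T))\<^sup>2) / 2"
    unfolding \<sigma> by (rule geom_discord_product_ensemble_le[OF ens]) simp_all
  also have "\<dots> \<le> ((norm ?x)\<^sup>2 + (norm ?T)\<^sup>2) / 2"
    using zero_le_power2[of "?x \<bullet> axis 1 1"] zero_le_power2[of "norm (axis 1 1 v* ?T)"]
    by (intro divide_right_mono) linarith+
  also have "\<dots> \<le> 1"
  proof -
    have "(norm ?x)\<^sup>2 \<le> 1" "(norm ?T)\<^sup>2 \<le> 1"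
      using product_ensemble_norm_le[OF ens] by (simp_all add: power_le_one)
    thus ?thesis by simp
  qed
  finally show ?thesis .
qed

lemma power2_norm_correlation_le:
  assumes ens: "product_ensemble n p a b" and T: "T = (\<Sum>k<n. p k *\<^sub>R outer_prod (a k) (b k))"
  shows "(norm T)\<^sup>2 \<le> (\<Sum>k<n. p k * norm (a k v* T))"
proof -
  have "(norm T)\<^sup>2 = T \<bullet> (\<Sum>k<n. p k *\<^sub>R outer_prod (a k) (b k))"
    unfolding power2_norm_eq_inner using T by simp
  also have "\<dots> = (\<Sum>k<n. p k * ((a k v* T) \<bullet> b k))"
    by (simp add: inner_sum_right inner_outer_prod)
  also have "\<dots> \<le> (\<Sum>k<n. p k * norm (a k v* T))"
  proof (rule sum_mono)
    fix k assume "k \<in> {..<n}"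
    hence k: "0 \<le> p k" "norm (b k) \<le> 1" using ens by (auto simp: product_ensemble_def)
    have "(a k v* T) \<bullet> b k \<le> norm (a k v* T) * norm (b k)" by (rule norm_cauchy_schwarz)
    also have "\<dots> \<le> norm (a k v* T)" using k(2) by (simp add: mult_left_le)
    finally have "(a k v* T) \<bullet> b k \<le> norm (a k v* T)" .
    thus "p k * ((a k v* T) \<bullet> b k) \<le> p k * norm (a k v* T)" using k(1) by (rule mult_left_mono)
  qed
  finally show ?thesis .
qed

lemma separable_geom_discord_le_of_local_zero:
  assumes "separable (bloch_state 0 y T)"
  shows "geom_discord (bloch_state 0 y T) \<le> 1/8"
proof -
  obtain n p a b where ens: "product_ensemble n p a b" and x: "0 = (\<Sum>k<n. p k *\<^sub>R a k)"
    and y: "y = (\<Sum>k<n. p k *\<^sub>R b k)" and T: "T = (\<Sum>k<n. p k *\<^sub>R outer_prod (a k) (b k))"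
    using separable_bloch_stateE[OF assms] .
  have p: "\<forall>k<n. 0 \<le> p k" "(\<Sum>k<n. p k) = 1" using ens by (simp_all add: product_ensemble_def)
  obtain k where k: "k < n" and "(\<Sum>k<n. p k * norm (a k v* T)) \<le> norm (a k v* T)"
    using convex_combination_le_some_term[OF p] .
  moreover have "norm (a k) \<le> 1" using ens k by (simp add: product_ensemble_def)
  then obtain e where e: "norm e = 1" and "norm (a k v* T) \<le> norm (e v* T)"
    by (rule exists_unit_vector_matrix_mult_ge)
  ultimately have "(norm T)\<^sup>2 \<le> norm (e v* T)"
    using power2_norm_correlation_le[OF ens T] by linarith
  hence T2: "((norm T)\<^sup>2)\<^sup>2 \<le> (norm (e v* T))\<^sup>2" by (rule power_mono) simp
  have "geom_discord (bloch_state 0 y T) \<le> ((norm T)\<^sup>2 - (norm (e v* T))\<^sup>2) / 2"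
    using geom_discord_product_ensemble_le[OF ens e x y T] by simp
  also have "\<dots> \<le> ((norm T)\<^sup>2 - ((norm T)\<^sup>2)\<^sup>2) / 2"
    using T2 by (intro divide_right_mono) simp_all
  also have "\<dots> \<le> 1/8"
    using zero_le_power2[of "(norm T)\<^sup>2 - 1/2"] by (simp add: power2_eq_square algebra_simps)
  finally show ?thesis .
qed

lemma separable_geom_discord_le_of_conformal:
  assumes "separable (bloch_state x y T)" and conf: "T ** transpose T = l\<^sup>2 *\<^sub>R mat 1"
  shows "geom_discord (bloch_state x y T) \<le> 1/9"
proof -
  obtain n p a b where ens: "product_ensemble n p a b" and x: "x = (\<Sum>k<n. p k *\<^sub>R a k)"
    and y: "y = (\<Sum>k<n. p k *\<^sub>R b k)" and T: "T = (\<Sum>k<n. p k *\<^sub>R outer_prod (a k) (b k))"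
    using separable_bloch_stateE[OF assms(1)] .
  have aT: "norm (v v* T) = \<bar>l\<bar> * norm v" for v
  proof -
    have "(norm (v v* T))\<^sup>2 = (\<bar>l\<bar> * norm v)\<^sup>2"
      using power2_norm_vector_matrix_mult_conformal[OF conf, of v] by (simp add: power_mult_distrib)
    thus ?thesis by (simp add: power2_eq_iff_nonneg)
  qed
  have "3 * l\<^sup>2 \<le> (\<Sum>k<n. p k * norm (a k v* T))"
    using power2_norm_correlation_le[OF ens T] power2_norm_conformal[OF conf] by simp
  also have "\<dots> \<le> (\<Sum>k<n. p k * \<bar>l\<bar>)"
    using ens unfolding aT product_ensemble_def
    by (intro sum_mono mult_left_mono) (auto simp: mult_left_le)
  also have "\<dots> = \<bar>l\<bar>" using ens by (simp add: product_ensemble_def sum_distrib_right[symmetric])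
  finally have "3 * \<bar>l\<bar> * \<bar>l\<bar> \<le> \<bar>l\<bar>" by (simp add: power2_eq_square)
  hence l: "\<bar>l\<bar> \<le> 1/3" by (cases "l = 0") (simp_all add: mult_le_cancel_right1)
  obtain e where e: "norm e = 1" and xe: "x \<bullet> e = norm x" using exists_unit_inner_eq_norm .
  have "geom_discord (bloch_state x y T) \<le> ((norm x)\<^sup>2 - (x \<bullet> e)\<^sup>2 + (norm T)\<^sup>2 - (norm (e v* T))\<^sup>2) / 2"
    by (rule geom_discord_product_ensemble_le[OF ens e x y T])
  also have "\<dots> = l\<^sup>2"
    using xe e power2_norm_conformal[OF conf] aT[of e] by (simp add: power_mult_distrib)
  also have "\<dots> \<le> (1/3)\<^sup>2" using power_mono[OF l abs_ge_zero, of 2] by simp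
  finally show ?thesis by (simp add: power2_eq_square)
qed

section \<open>A strongly discordant separable state\<close>

definition discordant_separable_state :: qqop where
  "discordant_separable_state =
     (1/2) *\<^sub>R kron (qubit_state (vector [3/5, 4/5, 0])) (qubit_state (vector [1, 0, 0]))
   + (1/2) *\<^sub>R kron (qubit_state (vector [3/5, -4/5, 0])) (qubit_state (vector [0, 1, 0]))"

lemma norm_vector3_le_1: "u\<^sup>2 + v\<^sup>2 + w\<^sup>2 \<le> 1 \<Longrightarrow> norm (vector [u, v, w] :: real^3) \<le> 1"
  by (rule power2_le_imp_le) (simp_all add: power2_norm_vec3)

lemma separable_discordant_separable_state: "separable discordant_separable_state"
  unfolding discordant_separable_state_def
  by (intro separable_mixture2 norm_vector3_le_1) (simp_all add: power2_eq_square)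

lemma discordant_separable_state_bloch:
  "discordant_separable_state = bloch_state (vector [3/5, 0, 0]) (vector [1/2, 1/2, 0])
     (vector [vector [3/10, 3/10, 0], vector [2/5, -2/5, 0], vector [0, 0, 0]])"
proof -
  have "(1/2) *\<^sub>R vector [3/5, 4/5, 0] + (1/2) *\<^sub>R vector [3/5, -4/5, 0] = (vector [3/5, 0, 0] :: real^3)"
    and "(1/2) *\<^sub>R vector [1, 0, 0] + (1/2) *\<^sub>R vector [0, 1, 0] = (vector [1/2, 1/2, 0] :: real^3)"
    and "(1/2) *\<^sub>R outer_prod (vector [3/5, 4/5, 0]) (vector [1, 0, 0])
       + (1/2) *\<^sub>R outer_prod (vector [3/5, -4/5, 0]) (vector [0, 1, 0])
       = (vector [vector [3/10, 3/10, 0], vector [2/5, -2/5, 0], vector [0, 0, 0]] :: real^3^3)"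
    by (simp_all add: vec_eq_iff forall_3 outer_prod_def)
  thus ?thesis
    unfolding discordant_separable_state_def kron_qubit_state bloch_state_convex2[OF field_sum_of_halves[of 1]]
    by (simp only:)
qed

lemma geom_discord_discordant_separable_state: "4/25 \<le> geom_discord discordant_separable_state"
  unfolding discordant_separable_state_bloch
proof (rule geom_discord_bloch_state_ge)
  fix n :: "real^3"
  assume "norm n = 1"
  hence n: "(n $ 1)\<^sup>2 + (n $ 2)\<^sup>2 + (n $ 3)\<^sup>2 = 1" by (simp add: power2_norm_vec3[symmetric])
  let ?x = "vector [3/5, 0, 0] :: real^3"
    and ?T = "vector [vector [3/10, 3/10, 0], vector [2/5, -2/5, 0], vector [0, 0, 0]] :: real^3^3"
  have "n v* ?T = vector [3/10 * n $ 1 + 2/5 * n $ 2, 3/10 * n $ 1 - 2/5 * n $ 2, 0]"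
    by (simp add: vec_eq_iff forall_3 vector_matrix_mult_def sum_3)
  hence "(norm ?x)\<^sup>2 - (?x \<bullet> n)\<^sup>2 + (norm ?T)\<^sup>2 - (norm (n v* ?T))\<^sup>2
      = 43/50 - 27/50 * (n $ 1)\<^sup>2 - 8/25 * (n $ 2)\<^sup>2"
    by (simp add: power2_norm_vec3 power2_norm_mat sum_3 inner_vec_def)
      (simp add: power2_eq_square algebra_simps)
  moreover have "8/25 \<le> 43/50 - 27/50 * (n $ 1)\<^sup>2 - 8/25 * (n $ 2)\<^sup>2"
    using n zero_le_power2[of "n $ 2"] zero_le_power2[of "n $ 3"] by linarith
  ultimately show "4/25 \<le> ((norm ?x)\<^sup>2 - (?x \<bullet> n)\<^sup>2 + (norm ?T)\<^sup>2 - (norm (n v* ?T))\<^sup>2) / 2"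
    by simp
qed

theorem proposition2:
  fixes x y :: "real^3" and T :: "real^3^3" and \<rho> :: qqop
  assumes "\<rho> = bloch_state x y T"
    and "separable \<rho>"
    and "x = 0 \<or> (\<exists>l::real. T ** transpose T = (l\<^sup>2) *\<^sub>R mat 1)"
  shows "geom_discord \<rho> < Sup (geom_discord ` {\<tau>. separable \<tau>})"
proof -
  have "geom_discord \<rho> \<le> 1/8"
    using assms(3)
  proof
    assume "x = 0"
    with assms(1,2) show ?thesis using separable_geom_discord_le_of_local_zero by simp
  next
    assume "\<exists>l::real. T ** transpose T = (l\<^sup>2) *\<^sub>R mat 1"
    with assms(1,2) have "geom_discord \<rho> \<le> 1/9" using separable_geom_discord_le_of_conformal by blast
    thus ?thesis by simp
  qed
  also have "\<dots> < 4/25" by simp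
  also have "\<dots> \<le> geom_discord discordant_separable_state"
    by (rule geom_discord_discordant_separable_state)
  also have "\<dots> \<le> Sup (geom_discord ` {\<tau>. separable \<tau>})"
    using separable_discordant_separable_state separable_geom_discord_le_one
    by (intro cSup_upper bdd_aboveI[of _ 1]) auto
  finally show ?thesis .
qed

end
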